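(* Let $H$ be a capacitated hypergraph with an MA-ordering $v_1,\ldots,v_n$, and let $\alpha\ge0$. If $v_i$ and $v_j$ ($i\ne j$) are in an $\alpha$-tight set, then $\lambda(v_i,v_j)\ge\alpha$.
   Context: A hypergraph $H=(V,E)$ has finite vertex set $V$, a finite multiset $E$ of edges (subsets of $V$) and capacities $c:E\to\mathbb{R}_{\ge0}$. $c(S)$ is the total capacity of edges meeting both $S$ and $V\setminus S$; for distinct $s,t$, $\lambda(s,t)=\min\{c(S):|S\cap\{s,t\}|=1\}$. For subsets $A_1,\ldots,A_k$, $d(A_1,\ldots,A_k)$ is the total capacity of edges meeting every $A_i$ (a vertex $v$ stands for $\{v\}$). $V_i=\{v_1,\ldots,v_i\}$; the ordering is an MA-ordering if $d(V_{i-1},v_i)\ge d(V_{i-1},v_j)$ for all $1\le i<j\le n$. A set of consecutive vertices $v_a,\ldots,v_b$ ($a\le b$) is $\alpha$-tight if $d(V_k,v_{k+1})\ge\alpha$ for all $a\le k<b$. *)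

theory Defs
  imports Complex_Main
begin

text \<open>A capacitated hypergraph: finite vertex set V, a finite index set Es of edges
  (so parallel edges, i.e. a multiset of edges, are allowed), an edge map
  edge :: 'e \<Rightarrow> 'a set and capacities cap :: 'e \<Rightarrow> real.\<close>

definition hypergraph :: "'a set \<Rightarrow> 'e set \<Rightarrow> ('e \<Rightarrow> 'a set) \<Rightarrow> ('e \<Rightarrow> real) \<Rightarrow> bool" where
  "hypergraph V Es edge cap \<longleftrightarrow> finite V \<and> finite Es \<and>
     (\<forall>e\<in>Es. edge e \<subseteq> V) \<and> (\<forall>e\<in>Es. cap e \<ge> 0)"

definition cut_cap :: "'a set \<Rightarrow> 'e set \<Rightarrow> ('e \<Rightarrow> 'a set) \<Rightarrow> ('e \<Rightarrow> real) \<Rightarrow> 'a set \<Rightarrow> real" where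
  "cut_cap V Es edge cap S =
     sum cap {e\<in>Es. edge e \<inter> S \<noteq> {} \<and> edge e \<inter> (V - S) \<noteq> {}}"

definition lam :: "'a set \<Rightarrow> 'e set \<Rightarrow> ('e \<Rightarrow> 'a set) \<Rightarrow> ('e \<Rightarrow> real) \<Rightarrow> 'a \<Rightarrow> 'a \<Rightarrow> real" where
  "lam V Es edge cap s t =
     Min {cut_cap V Es edge cap S | S. S \<subseteq> V \<and> card (S \<inter> {s, t}) = 1}"

definition dcap :: "'e set \<Rightarrow> ('e \<Rightarrow> 'a set) \<Rightarrow> ('e \<Rightarrow> real) \<Rightarrow> 'a set list \<Rightarrow> real" where
  "dcap Es edge cap As = sum cap {e\<in>Es. \<forall>A\<in>set As. edge e \<inter> A \<noteq> {}}"

definition prefix_set :: "(nat \<Rightarrow> 'a) \<Rightarrow> nat \<Rightarrow> 'a set" where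
  "prefix_set v i = v ` {1..i}"

definition MA_ordering :: "'a set \<Rightarrow> 'e set \<Rightarrow> ('e \<Rightarrow> 'a set) \<Rightarrow> ('e \<Rightarrow> real) \<Rightarrow> (nat \<Rightarrow> 'a) \<Rightarrow> bool" where
  "MA_ordering V Es edge cap v \<longleftrightarrow> bij_betw v {1..card V} V \<and>
     (\<forall>i j. 1 \<le> i \<and> i < j \<and> j \<le> card V \<longrightarrow>
        dcap Es edge cap [prefix_set v (i - 1), {v i}] \<ge> dcap Es edge cap [prefix_set v (i - 1), {v j}])"

text \<open>The consecutive vertices v_a,...,v_b (1 \<le> a \<le> b \<le> n) form an alpha-tight set.\<close>
definition tight :: "'a set \<Rightarrow> 'e set \<Rightarrow> ('e \<Rightarrow> 'a set) \<Rightarrow> ('e \<Rightarrow> real) \<Rightarrow> (nat \<Rightarrow> 'a) \<Rightarrow> real \<Rightarrow> nat \<Rightarrow> nat \<Rightarrow> bool" where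
  "tight V Es edge cap v \<alpha> a b \<longleftrightarrow> 1 \<le> a \<and> a \<le> b \<and> b \<le> card V \<and>
     (\<forall>k. a \<le> k \<and> k < b \<longrightarrow> dcap Es edge cap [prefix_set v k, {v (Suc k)}] \<ge> \<alpha>)"

end

theory Submission
  imports Defs
begin

text \<open>Let S separate v_k and v_(k+1), and write c_m(S) for the capacity of the edges
  meeting both S \<inter> V_m and V_m - S. The key inequality is d(V_k, v_(k+1)) \<le> c_(k+1)(S).
  To prove it, let v_(i+1), ..., v_k be the maximal run of vertices before v_(k+1) lying on
  the other side of S. The edges counted by d(V_k, v_(k+1)) either meet V_i, and by the
  MA property and induction (S separates v_i and v_(i+1)) they weigh at most
  d(V_i, v_(i+1)) \<le> c_(i+1)(S); or they avoid V_i, and then they join v_(k+1) to the run,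
  so they are cut edges of V_(k+1) not already counted in c_(i+1)(S).
  If S separates two vertices of an \<alpha>-tight set, it separates two consecutive ones
  v_k, v_(k+1), and then \<alpha> \<le> d(V_k, v_(k+1)) \<le> c_(k+1)(S) \<le> c(S).\<close>

text \<open>The cut capacity of S once every edge is restricted to U; c_m(S) above is the case U = V_m.\<close>
definition cut_cap_within :: "'e set \<Rightarrow> ('e \<Rightarrow> 'a set) \<Rightarrow> ('e \<Rightarrow> real) \<Rightarrow> 'a set \<Rightarrow> 'a set \<Rightarrow> real" where
  "cut_cap_within Es edge cap U S =
     sum cap {e\<in>Es. edge e \<inter> (U \<inter> S) \<noteq> {} \<and> edge e \<inter> (U - S) \<noteq> {}}"

lemma cut_cap_within_eq_cut_cap:
  "S \<subseteq> V \<Longrightarrow> cut_cap_within Es edge cap V S = cut_cap V Es edge cap S"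
  by (simp add: cut_cap_within_def cut_cap_def Int_absorb1)

lemma prefix_set_0 [simp]: "prefix_set v 0 = {}"
  by (simp add: prefix_set_def)

lemma prefix_set_Suc: "prefix_set v (Suc k) = insert (v (Suc k)) (prefix_set v k)"
  by (simp add: prefix_set_def atLeastAtMostSuc_conv)

lemma prefix_set_mono: "i \<le> k \<Longrightarrow> prefix_set v i \<subseteq> prefix_set v k"
  by (auto simp: prefix_set_def)

lemma prefix_set_diffE:
  assumes "y \<in> prefix_set v k - prefix_set v i"
  obtains l where "i < l" "l \<le> k" "y = v l"
proof -
  from assms obtain l where "1 \<le> l" "l \<le> k" "y = v l" "y \<notin> prefix_set v i"
    by (auto simp: prefix_set_def)
  moreover have "i < l"
    using calculation by (auto simp: prefix_set_def not_less)
  ultimately show thesis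
    using that by blast
qed

lemma MA_ordering_dcap_le:
  assumes "MA_ordering V Es edge cap v" "i < j" "j \<le> card V"
  shows "dcap Es edge cap [prefix_set v i, {v j}] \<le> dcap Es edge cap [prefix_set v i, {v (Suc i)}]"
proof -
  have "\<forall>i j. 1 \<le> i \<and> i < j \<and> j \<le> card V \<longrightarrow>
      dcap Es edge cap [prefix_set v (i - 1), {v j}] \<le> dcap Es edge cap [prefix_set v (i - 1), {v i}]"
    using assms(1) by (simp add: MA_ordering_def)
  from this[rule_format, of "Suc i" j] assms(2,3) show ?thesis
    by (cases "Suc i = j") auto
qed

lemma exists_maximal_final_run:
  fixes k :: nat
  shows "\<exists>i\<le>k. (\<forall>l. i < l \<and> l \<le> k \<longrightarrow> Q l) \<and> (i = 0 \<or> \<not> Q i)"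
proof (induction k)
  case (Suc k)
  show ?case
  proof (cases "Q (Suc k)")
    case True
    with Suc.IH show ?thesis by (metis le_SucE le_SucI)
  next
    case False
    then show ?thesis by auto
  qed
qed simp

lemma exists_consecutive_change:
  assumes "P p \<noteq> P q"
  shows "\<exists>k. min p q \<le> k \<and> k < max p q \<and> P k \<noteq> P (Suc k)"
proof -
  have "\<exists>k. p \<le> k \<and> k < q \<and> P k \<noteq> P (Suc k)" if "p \<le> q" "P p \<noteq> P q" for p q
    using that
  proof (induction q)
    case (Suc q)
    show ?case
    proof (cases "p = Suc q")
      case False
      with Suc.prems have "p \<le> q"
        by simp
      with Suc show ?thesis
        by (cases "P p = P q") (auto intro: less_SucI)
    qed (use Suc.prems in simp)
  qed simp
  from this[of p q] this[of q p] assms show ?thesis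
    by (cases "p \<le> q") (auto simp: min_def max_def)
qed

context
  fixes Es :: "'e set" and edge :: "'e \<Rightarrow> 'a set" and cap :: "'e \<Rightarrow> real"
  assumes finite_edges: "finite Es"
    and cap_nonneg: "\<And>e. e \<in> Es \<Longrightarrow> 0 \<le> cap e"
begin

lemma cut_cap_within_nonneg: "0 \<le> cut_cap_within Es edge cap U S"
  unfolding cut_cap_within_def by (rule sum_nonneg) (auto intro: cap_nonneg)

lemma cut_cap_within_mono:
  "U \<subseteq> W \<Longrightarrow> cut_cap_within Es edge cap U S \<le> cut_cap_within Es edge cap W S"
  unfolding cut_cap_within_def
  using finite_edges cap_nonneg by (intro sum_mono2) auto

lemma dcap_pair_split:
  assumes "A \<subseteq> B"
  shows "dcap Es edge cap [B, {x}] =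
    dcap Es edge cap [A, {x}] + sum cap {e\<in>Es. x \<in> edge e \<and> edge e \<inter> B \<noteq> {} \<and> edge e \<inter> A = {}}"
proof -
  have "{e\<in>Es. \<forall>C\<in>set [B, {x}]. edge e \<inter> C \<noteq> {}} =
        {e\<in>Es. \<forall>C\<in>set [A, {x}]. edge e \<inter> C \<noteq> {}} \<union>
        {e\<in>Es. x \<in> edge e \<and> edge e \<inter> B \<noteq> {} \<and> edge e \<inter> A = {}}"
    using assms by auto
  then show ?thesis
    unfolding dcap_def using finite_edges by (subst sum.union_disjoint[symmetric]) auto
qed

text \<open>An edge cut by insert w A meets A, since it has vertices on both sides;
  so the edges avoiding A that join x to the opposite side are new cut edges.\<close>
lemma cut_cap_within_insert_add_le:
  assumes "insert w A \<subseteq> W" "B \<subseteq> W" "x \<in> W"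
    and opposite: "\<And>y. y \<in> B - A \<Longrightarrow> (y \<in> S) \<noteq> (x \<in> S)"
  shows "cut_cap_within Es edge cap (insert w A) S
           + sum cap {e\<in>Es. x \<in> edge e \<and> edge e \<inter> B \<noteq> {} \<and> edge e \<inter> A = {}}
         \<le> cut_cap_within Es edge cap W S"
proof -
  define C where "C U = {e\<in>Es. edge e \<inter> (U \<inter> S) \<noteq> {} \<and> edge e \<inter> (U - S) \<noteq> {}}" for U
  define X where "X = {e\<in>Es. x \<in> edge e \<and> edge e \<inter> B \<noteq> {} \<and> edge e \<inter> A = {}}"
  have "C (insert w A) \<inter> X = {}"
    unfolding C_def X_def by blast
  moreover have "X \<subseteq> C W"
  proof
    fix e assume "e \<in> X"
    then obtain y where "y \<in> edge e" "y \<in> B - A" "x \<in> edge e" "e \<in> Es"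
      by (auto simp: X_def)
    with opposite[of y] assms(2,3) show "e \<in> C W"
      unfolding C_def by blast
  qed
  moreover have "C (insert w A) \<subseteq> C W"
    using assms(1) unfolding C_def by blast
  ultimately have "sum cap (C (insert w A)) + sum cap X \<le> sum cap (C W)"
    using finite_edges cap_nonneg
    by (subst sum.union_disjoint[symmetric]) (auto simp: C_def X_def intro!: sum_mono2)
  then show ?thesis
    unfolding cut_cap_within_def C_def X_def .
qed

lemma cut_cap_within_prefix_add_run_le:
  assumes "i \<le> k" and run: "\<And>l. i < l \<Longrightarrow> l \<le> k \<Longrightarrow> (v l \<in> S) \<noteq> (v (Suc k) \<in> S)"
  shows "cut_cap_within Es edge cap (prefix_set v (Suc i)) S
          + sum cap {e\<in>Es. v (Suc k) \<in> edge e \<and> edge e \<inter> prefix_set v k \<noteq> {}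
                             \<and> edge e \<inter> prefix_set v i = {}}
        \<le> cut_cap_within Es edge cap (prefix_set v (Suc k)) S"
  unfolding prefix_set_Suc[of v i]
proof (rule cut_cap_within_insert_add_le)
  show "insert (v (Suc i)) (prefix_set v i) \<subseteq> prefix_set v (Suc k)"
    using \<open>i \<le> k\<close> by (metis Suc_le_mono prefix_set_Suc prefix_set_mono)
  show "prefix_set v k \<subseteq> prefix_set v (Suc k)" "v (Suc k) \<in> prefix_set v (Suc k)"
    by (auto simp: prefix_set_Suc)
  show "(y \<in> S) \<noteq> (v (Suc k) \<in> S)" if "y \<in> prefix_set v k - prefix_set v i" for y
    using that by (elim prefix_set_diffE) (use run in blast)
qed

lemma MA_ordering_attachment_le_prefix_cut:
  assumes ma: "MA_ordering V Es edge cap v"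
  shows "Suc k \<le> card V \<Longrightarrow> (v k \<in> S) \<noteq> (v (Suc k) \<in> S) \<Longrightarrow>
    dcap Es edge cap [prefix_set v k, {v (Suc k)}]
      \<le> cut_cap_within Es edge cap (prefix_set v (Suc k)) S"
proof (induction k rule: less_induct)
  case (less k)
  let ?opposite = "\<lambda>l. (v l \<in> S) \<noteq> (v (Suc k) \<in> S)"
  obtain i where "i \<le> k" and run: "\<And>l. i < l \<Longrightarrow> l \<le> k \<Longrightarrow> ?opposite l"
    and start: "i = 0 \<or> \<not> ?opposite i"
    using exists_maximal_final_run[of k ?opposite] by auto
  have before_run: "dcap Es edge cap [prefix_set v i, {v (Suc k)}]
      \<le> cut_cap_within Es edge cap (prefix_set v (Suc i)) S"
  proof (cases "i = 0")
    case True
    then show ?thesis by (simp add: dcap_def cut_cap_within_nonneg)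
  next
    case False
    with start less.prems(2) have "i < k" and "\<not> ?opposite i"
      using \<open>i \<le> k\<close> by (auto simp: le_less)
    with run[of "Suc i"] less.prems(1) have
      "dcap Es edge cap [prefix_set v i, {v (Suc i)}]
         \<le> cut_cap_within Es edge cap (prefix_set v (Suc i)) S"
      by (intro less.IH) auto
    moreover have "dcap Es edge cap [prefix_set v i, {v (Suc k)}]
                   \<le> dcap Es edge cap [prefix_set v i, {v (Suc i)}]"
      using MA_ordering_dcap_le[OF ma] \<open>i < k\<close> less.prems(1) by simp
    ultimately show ?thesis by linarith
  qed
  with cut_cap_within_prefix_add_run_le[of i k v S, OF \<open>i \<le> k\<close> run]
    dcap_pair_split[OF prefix_set_mono[OF \<open>i \<le> k\<close>, of v], of "v (Suc k)"] show ?case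
    by linarith
qed

end

lemma tight_separation_le_cut_cap:
  assumes hg: "hypergraph V Es edge cap" and ma: "MA_ordering V Es edge cap v"
    and tight: "tight V Es edge cap v \<alpha> a b"
    and "a \<le> p" "p \<le> b" "a \<le> q" "q \<le> b"
    and "S \<subseteq> V" and separates: "(v p \<in> S) \<noteq> (v q \<in> S)"
  shows "\<alpha> \<le> cut_cap V Es edge cap S"
proof -
  have fin: "finite Es" and nonneg: "\<And>e. e \<in> Es \<Longrightarrow> 0 \<le> cap e"
    using hg by (auto simp: hypergraph_def)
  obtain k where "min p q \<le> k" "k < max p q" and change: "(v k \<in> S) \<noteq> (v (Suc k) \<in> S)"
    using exists_consecutive_change[of "\<lambda>l. v l \<in> S", OF separates] by blast
  with assms(4-7) have "a \<le> k" "k < b"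
    by linarith+
  with tight have card: "Suc k \<le> card V" by (simp add: tight_def)
  have "prefix_set v (Suc k) \<subseteq> V"
    using ma card unfolding MA_ordering_def prefix_set_def bij_betw_def by auto
  have "\<alpha> \<le> dcap Es edge cap [prefix_set v k, {v (Suc k)}]"
    using tight \<open>a \<le> k\<close> \<open>k < b\<close> by (simp add: tight_def)
  also have "\<dots> \<le> cut_cap_within Es edge cap (prefix_set v (Suc k)) S"
    using MA_ordering_attachment_le_prefix_cut[OF fin nonneg ma card change] .
  also have "\<dots> \<le> cut_cap_within Es edge cap V S"
    using cut_cap_within_mono[OF fin nonneg \<open>prefix_set v (Suc k) \<subseteq> V\<close>] .
  also have "\<dots> = cut_cap V Es edge cap S"
    using \<open>S \<subseteq> V\<close> by (rule cut_cap_within_eq_cut_cap)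
  finally show ?thesis .
qed

lemma lam_geI:
  assumes "finite V" "s \<in> V" "s \<noteq> t"
    and "\<And>S. S \<subseteq> V \<Longrightarrow> (s \<in> S) \<noteq> (t \<in> S) \<Longrightarrow> \<alpha> \<le> cut_cap V Es edge cap S"
  shows "\<alpha> \<le> lam V Es edge cap s t"
proof -
  let ?cuts = "{cut_cap V Es edge cap S | S. S \<subseteq> V \<and> card (S \<inter> {s, t}) = 1}"
  have "?cuts \<subseteq> cut_cap V Es edge cap ` Pow V"
    by auto
  then have "finite ?cuts"
    by (rule finite_subset) (simp add: \<open>finite V\<close>)
  moreover have "cut_cap V Es edge cap {s} \<in> ?cuts"
    unfolding mem_Collect_eq by (rule exI[of _ "{s}"]) (simp add: \<open>s \<in> V\<close>)
  moreover have "\<alpha> \<le> x" if "x \<in> ?cuts" for x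
  proof -
    from that obtain S where S: "x = cut_cap V Es edge cap S" "S \<subseteq> V" "card (S \<inter> {s, t}) = 1"
      by blast
    with \<open>s \<noteq> t\<close> have "(s \<in> S) \<noteq> (t \<in> S)"
      by (cases "s \<in> S"; cases "t \<in> S") simp_all
    with S assms(4) show ?thesis
      by simp
  qed
  ultimately show ?thesis
    unfolding lam_def by (subst Min_ge_iff) auto
qed

theorem mainTheorem19:
  fixes V :: "'a set" and Es :: "'e set" and edge :: "'e \<Rightarrow> 'a set" and cap :: "'e \<Rightarrow> real"
    and v :: "nat \<Rightarrow> 'a" and \<alpha> :: real and a b i j :: nat
  assumes "hypergraph V Es edge cap"
    and "MA_ordering V Es edge cap v"
    and "\<alpha> \<ge> 0"
    and "tight V Es edge cap v \<alpha> a b"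
    and "a \<le> i" and "i \<le> b" and "a \<le> j" and "j \<le> b" and "i \<noteq> j"
  shows "lam V Es edge cap (v i) (v j) \<ge> \<alpha>"
proof (rule lam_geI)
  have "bij_betw v {1..card V} V"
    using assms(2) by (simp add: MA_ordering_def)
  moreover have "i \<in> {1..card V}" "j \<in> {1..card V}"
    using assms(4-8) by (auto simp: tight_def)
  ultimately show "v i \<in> V" "v i \<noteq> v j"
    using \<open>i \<noteq> j\<close> by (auto simp: bij_betw_def inj_on_eq_iff)
  show "finite V"
    using assms(1) by (simp add: hypergraph_def)
  show "\<alpha> \<le> cut_cap V Es edge cap S" if "S \<subseteq> V" "(v i \<in> S) \<noteq> (v j \<in> S)" for S
    using tight_separation_le_cut_cap[OF assms(1,2,4-8) that] .
qed

end
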